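(* Let $\beta\in(0,1/2^{|S|})$ and $\varepsilon\in\left(0,\frac{\beta(1-\beta)}{L\,|S|^{4}}\right)$. For every irreducible transition matrix $q$ on $S$ and every transition matrix $\widehat q$ on $S$ that is $(\varepsilon,\beta)$-close to $q$: (1) $\widehat q$ is irreducible; (2) its stationary distribution $\widehat\mu$ satisfies $\left|1-\frac{\widehat\mu_s}{\mu_s}\right|\le 18\beta L$ for every $s\in S$.
   Context: $S$ is a finite set with $|S|\ge 2$. A transition matrix on $S$ is $q=(q(t\mid s))_{s,t\in S}$ with nonnegative entries and $\sum_{t}q(t\mid s)=1$ for each $s$; for $D\subseteq S$ write $q(D\mid s)=\sum_{t\in D}q(t\mid s)$, and for $C\subseteq S$ write $\overline C=S\setminus C$. For irreducible $q$, $\mu=(\mu_s)_{s\in S}$ denotes its stationary distribution. Define $\zeta_q=\min_{\emptyset\neq C\subsetneq S}\sum_{s\in C}\mu_s\,q(\overline C\mid s)$. Given $\varepsilon,\beta>0$, a transition matrix $\widehat q$ is $(\varepsilon,\beta)$-close to $q$ if for all $s,t\in S$, $\left|1-\frac{\widehat q(t\mid s)}{q(t\mid s)}\right|\le\beta$ whenever (a) $\mu_s q(t\mid s)\ge\varepsilon\zeta_q$ or (b) $\mu_s\widehat q(t\mid s)\ge\varepsilon\zeta_q$ (in case (b) this requires in particular $q(t\mid s)>0$). Finally $L=\sum_{n=1}^{|S|-1}\binom{|S|}{n}n^{|S|}$. *)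

theory Defs
  imports Complex_Main "HOL-Library.Cardinality"
begin

text \<open>The finite state space S is a finite type 's. A transition matrix is
  q :: 's => 's => real, where q s t stands for q(t | s).\<close>

definition transition_matrix :: "('s::finite \<Rightarrow> 's \<Rightarrow> real) \<Rightarrow> bool" where
  "transition_matrix q \<longleftrightarrow> (\<forall>s t. 0 \<le> q s t) \<and> (\<forall>s. (\<Sum>t\<in>UNIV. q s t) = 1)"

definition irreducible :: "('s::finite \<Rightarrow> 's \<Rightarrow> real) \<Rightarrow> bool" where
  "irreducible q \<longleftrightarrow> transition_matrix q \<and>
     (\<forall>s t. (s, t) \<in> {(x, y). 0 < q x y}\<^sup>*)"

definition stationary_dist :: "('s::finite \<Rightarrow> 's \<Rightarrow> real) \<Rightarrow> ('s \<Rightarrow> real) \<Rightarrow> bool" where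
  "stationary_dist q \<mu> \<longleftrightarrow> (\<forall>s. 0 \<le> \<mu> s) \<and> (\<Sum>s\<in>UNIV. \<mu> s) = 1 \<and>
     (\<forall>t. (\<Sum>s\<in>UNIV. \<mu> s * q s t) = \<mu> t)"

definition trans_prob_set :: "('s::finite \<Rightarrow> 's \<Rightarrow> real) \<Rightarrow> 's set \<Rightarrow> 's \<Rightarrow> real" where
  "trans_prob_set q D s = (\<Sum>t\<in>D. q s t)"

definition zeta :: "('s::finite \<Rightarrow> 's \<Rightarrow> real) \<Rightarrow> ('s \<Rightarrow> real) \<Rightarrow> real" where
  "zeta q \<mu> = Min {(\<Sum>s\<in>C. \<mu> s * trans_prob_set q (UNIV - C) s) | C. C \<noteq> {} \<and> C \<noteq> UNIV}"

definition close :: "real \<Rightarrow> real \<Rightarrow> ('s::finite \<Rightarrow> 's \<Rightarrow> real) \<Rightarrow> ('s \<Rightarrow> real)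
     \<Rightarrow> ('s \<Rightarrow> 's \<Rightarrow> real) \<Rightarrow> bool" where
  "close \<epsilon> \<beta> q \<mu> qh \<longleftrightarrow> (\<forall>s t.
      (\<mu> s * q s t \<ge> \<epsilon> * zeta q \<mu> \<or> \<mu> s * qh s t \<ge> \<epsilon> * zeta q \<mu>) \<longrightarrow>
        (0 < q s t \<and> \<bar>1 - qh s t / q s t\<bar> \<le> \<beta>))"

definition L_const :: "nat \<Rightarrow> real" where
  "L_const N = (\<Sum>n=1..N-1. real (N choose n) * real n ^ N)"

end

theory Submission
  imports Defs
begin

(* For a set C of states, the stationary flow of q out of C equals the flow into C and is at least
   \<zeta>_q. Closeness changes every edge flow \<mu>_s q(t|s) by a factor 1 \<plusminus> \<beta> up to an additive \<epsilon> \<zeta>_q,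
   so every cut flow of \<mu> under qh changes by a factor 1 \<plusminus> \<beta> up to an additive
   |S|^2 \<epsilon> \<zeta>_q \<le> \<beta> \<zeta>_q. Hence every cut of qh carries positive flow, which is irreducibility, and
   the flow of \<mu> under qh into C is at most 1 + 8 \<beta> times the flow out of C. Comparing this with
   the balance of the flows of the stationary distribution \<mu>h of qh shows that every cut is crossed
   by an edge along which the ratio \<mu>h/\<mu> drops by at most the factor 1 + 8 \<beta>. Chaining such edges
   through at most |S| - 1 cuts puts all ratios within the factor (1 + 8 \<beta>)^(|S| - 1) of each
   other, and since \<mu> and \<mu>h both sum to 1 the ratios lie on both sides of 1. *)

definition cut_flow :: "('s::finite \<Rightarrow> real) \<Rightarrow> ('s \<Rightarrow> 's \<Rightarrow> real) \<Rightarrow> 's set \<Rightarrow> real" where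
  "cut_flow w q C = (\<Sum>u\<in>C. \<Sum>t\<in>UNIV - C. w u * q u t)"

lemma stationary_cut_flow_balance:
  fixes q :: "'s::finite \<Rightarrow> 's \<Rightarrow> real"
  assumes q: "transition_matrix q" and w: "stationary_dist q w"
  shows "cut_flow w q C = cut_flow w q (UNIV - C)"
proof -
  let ?within = "\<Sum>u\<in>C. \<Sum>t\<in>C. w u * q u t"
  have row: "(\<Sum>t\<in>C. q u t) + (\<Sum>t\<in>UNIV - C. q u t) = 1" for u
    using q sum.subset_diff[of C UNIV "q u"] unfolding transition_matrix_def by simp
  have "(\<Sum>t\<in>C. w t) = (\<Sum>u\<in>C. w u * ((\<Sum>t\<in>C. q u t) + (\<Sum>t\<in>UNIV - C. q u t)))"
    using row by simp
  also have "\<dots> = ?within + cut_flow w q C"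
    unfolding cut_flow_def by (simp add: distrib_left sum_distrib_left sum.distrib)
  finally have out: "(\<Sum>t\<in>C. w t) = ?within + cut_flow w q C" .
  have "(\<Sum>t\<in>C. w t) = (\<Sum>t\<in>C. \<Sum>u\<in>UNIV. w u * q u t)"
    using w unfolding stationary_dist_def by simp
  also have "\<dots> = (\<Sum>u\<in>UNIV. \<Sum>t\<in>C. w u * q u t)" by (rule sum.swap)
  also have "\<dots> = cut_flow w q (UNIV - C) + ?within"
    unfolding cut_flow_def by (subst sum.subset_diff[of C UNIV]) (auto simp: Diff_Diff_Int)
  finally show ?thesis using out by simp
qed

lemma irreducible_stationary_dist_pos:
  fixes q :: "'s::finite \<Rightarrow> 's \<Rightarrow> real"
  assumes q: "irreducible q" and \<mu>: "stationary_dist q \<mu>"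
  shows "0 < \<mu> s"
proof (rule ccontr)
  assume "\<not> 0 < \<mu> s"
  then have s: "\<mu> s = 0" using \<mu> unfolding stationary_dist_def by (simp add: not_less order_antisym)
  have nonneg: "0 \<le> \<mu> x * q x y" for x y
    using \<mu> q unfolding stationary_dist_def irreducible_def transition_matrix_def by simp
  have zero: "\<mu> x = 0" if "(x, s) \<in> {(x, y). 0 < q x y}\<^sup>*" for x
    using that
  proof (induction rule: converse_rtrancl_induct)
    case base
    show ?case by (rule s)
  next
    case (step x y)
    then have "(\<Sum>z\<in>UNIV. \<mu> z * q z y) = 0" using \<mu> unfolding stationary_dist_def by simp
    then have "\<mu> x * q x y = 0" using nonneg sum_nonneg_eq_0_iff[of UNIV "\<lambda>z. \<mu> z * q z y"] by simp
    then show ?case using step by simp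
  qed
  have "\<mu> x = 0" for x
    using q zero unfolding irreducible_def by blast
  then show False using \<mu> unfolding stationary_dist_def by simp
qed

lemma rtrancl_leaves_set:
  assumes "(s, t) \<in> R\<^sup>*" "s \<in> C" "t \<notin> C"
  shows "\<exists>x\<in>C. \<exists>y. y \<notin> C \<and> (x, y) \<in> R"
  using assms
proof (induction rule: rtrancl_induct)
  case (step y z)
  then show ?case by (cases "y \<in> C") auto
qed simp

lemma irreducible_iff_cut_flow_pos:
  fixes q :: "'s::finite \<Rightarrow> 's \<Rightarrow> real"
  assumes q: "transition_matrix q" and w: "\<And>u. 0 < w u"
  shows "irreducible q \<longleftrightarrow> (\<forall>C. C \<noteq> {} \<longrightarrow> C \<noteq> UNIV \<longrightarrow> 0 < cut_flow w q C)"
proof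
  assume irr: "irreducible q"
  have nonneg: "0 \<le> w u * q u t" for u t
    using q w[of u] unfolding transition_matrix_def by simp
  show "\<forall>C. C \<noteq> {} \<longrightarrow> C \<noteq> UNIV \<longrightarrow> 0 < cut_flow w q C"
  proof (intro allI impI)
    fix C :: "'s set"
    assume "C \<noteq> {}" "C \<noteq> UNIV"
    then obtain s t where st: "s \<in> C" "t \<notin> C" by blast
    have "(s, t) \<in> {(x, y). 0 < q x y}\<^sup>*"
      using irr unfolding irreducible_def by blast
    then obtain x y where xy: "x \<in> C" "y \<notin> C" "0 < q x y"
      using rtrancl_leaves_set[OF _ st] by blast
    have "0 < w x * q x y" using xy w[of x] by simp
    then have row: "0 < (\<Sum>t\<in>UNIV - C. w x * q x t)"
      using xy nonneg by (intro sum_pos2[where i = y]) simp_all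
    show "0 < cut_flow w q C"
      unfolding cut_flow_def
      by (rule sum_pos2[where i = x]) (use xy row nonneg in \<open>simp_all add: sum_nonneg\<close>)
  qed
next
  assume cut: "\<forall>C. C \<noteq> {} \<longrightarrow> C \<noteq> UNIV \<longrightarrow> 0 < cut_flow w q C"
  have "(s, t) \<in> {(x, y). 0 < q x y}\<^sup>*" for s t
  proof -
    define C where "C = {u. (s, u) \<in> {(x, y). 0 < q x y}\<^sup>*}"
    have "C = UNIV"
    proof (rule ccontr)
      assume "C \<noteq> UNIV"
      moreover have "C \<noteq> {}" unfolding C_def by blast
      ultimately have "cut_flow w q C \<noteq> 0" using cut by (metis less_irrefl)
      moreover have "cut_flow w q C = 0" if "\<forall>u\<in>C. \<forall>v\<in>UNIV - C. w u * q u v = 0"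
        unfolding cut_flow_def using that by (simp add: sum.neutral)
      ultimately obtain u v where "u \<in> C" "v \<notin> C" "q u v \<noteq> 0" by auto
      moreover have "0 \<le> q u v" using q unfolding transition_matrix_def by simp
      ultimately show False unfolding C_def by (auto intro: rtrancl_into_rtrancl)
    qed
    then show ?thesis unfolding C_def by blast
  qed
  then show "irreducible q" using q unfolding irreducible_def by blast
qed

lemma zeta_eq_Min_cut_flow:
  "zeta q \<mu> = Min {cut_flow \<mu> q C | C. C \<noteq> {} \<and> C \<noteq> UNIV}"
  unfolding zeta_def cut_flow_def trans_prob_set_def by (simp add: sum_distrib_left)

lemma zeta_le_cut_flow:
  fixes q :: "'s::finite \<Rightarrow> 's \<Rightarrow> real"
  assumes "C \<noteq> {}" "C \<noteq> UNIV"
  shows "zeta q \<mu> \<le> cut_flow \<mu> q C"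
  unfolding zeta_eq_Min_cut_flow using assms by (auto intro!: Min_le)

lemma zeta_pos:
  fixes q :: "'s::finite \<Rightarrow> 's \<Rightarrow> real"
  assumes card: "CARD('s) \<ge> 2" and q: "irreducible q" and \<mu>: "stationary_dist q \<mu>"
  shows "0 < zeta q \<mu>"
proof -
  have "\<not> CARD('s) \<le> Suc 0" using card by simp
  then obtain a b :: 's where "a \<noteq> b" by (auto simp: card_le_Suc0_iff_eq)
  then have "{a} \<noteq> UNIV" by auto
  then have ne: "{cut_flow \<mu> q C | C. C \<noteq> {} \<and> C \<noteq> UNIV} \<noteq> {}" by blast
  have "0 < cut_flow \<mu> q C" if "C \<noteq> {}" "C \<noteq> UNIV" for C
    using irreducible_iff_cut_flow_pos[of q \<mu>] q that irreducible_stationary_dist_pos[OF q \<mu>]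
    unfolding irreducible_def by blast
  then show ?thesis unfolding zeta_eq_Min_cut_flow using ne by (subst Min_gr_iff) auto
qed

lemma cut_flow_scale: "cut_flow (\<lambda>u. c * w u) q C = c * cut_flow w q C"
  unfolding cut_flow_def by (simp add: sum_distrib_left mult.assoc)

lemma cut_flow_mono_weight:
  assumes "\<And>u. u \<in> C \<Longrightarrow> w u \<le> w' u" "\<And>u t. 0 \<le> q u t"
  shows "cut_flow w q C \<le> cut_flow w' q C"
  unfolding cut_flow_def using assms by (intro sum_mono mult_right_mono) auto

lemma close_edge_bounds:
  fixes q qh :: "'s::finite \<Rightarrow> 's \<Rightarrow> real"
  assumes cl: "close \<epsilon> \<beta> q \<mu> qh"
    and nonneg: "0 \<le> \<mu> u" "0 \<le> q u t" "0 \<le> qh u t" "0 \<le> \<epsilon> * zeta q \<mu>"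
    and \<beta>: "0 \<le> \<beta>"
  shows "(1 - \<beta>) * (\<mu> u * q u t) \<le> \<mu> u * qh u t + \<epsilon> * zeta q \<mu>"
    and "\<mu> u * qh u t \<le> (1 + \<beta>) * (\<mu> u * q u t) + \<epsilon> * zeta q \<mu>"
proof -
  let ?p = "\<mu> u * q u t" and ?ph = "\<mu> u * qh u t" and ?e = "\<epsilon> * zeta q \<mu>"
  have "(1 - \<beta>) * ?p \<le> ?ph + ?e \<and> ?ph \<le> (1 + \<beta>) * ?p + ?e"
  proof (cases "?e \<le> ?p \<or> ?e \<le> ?ph")
    case True
    then have q_pos: "0 < q u t" and "\<bar>1 - qh u t / q u t\<bar> \<le> \<beta>"
      using cl unfolding close_def by auto
    then have "1 - \<beta> \<le> qh u t / q u t" "qh u t / q u t \<le> 1 + \<beta>"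
      by auto
    then have "(1 - \<beta>) * q u t \<le> qh u t" "qh u t \<le> (1 + \<beta>) * q u t"
      using q_pos by (simp_all add: le_divide_eq divide_le_eq)
    then have "(1 - \<beta>) * ?p \<le> ?ph" "?ph \<le> (1 + \<beta>) * ?p"
      using nonneg(1) by (simp_all add: mult.left_commute mult_left_mono)
    then show ?thesis using nonneg(4) by linarith
  next
    case False
    have "0 \<le> ?p" "0 \<le> \<beta> * ?p" "0 \<le> ?ph" using nonneg \<beta> by simp_all
    then show ?thesis using False by (simp add: algebra_simps)
  qed
  then show "(1 - \<beta>) * ?p \<le> ?ph + ?e" and "?ph \<le> (1 + \<beta>) * ?p + ?e"
    by simp_all
qed

lemma cut_sum_le_affine:
  fixes f g :: "'s::finite \<Rightarrow> 's \<Rightarrow> real"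
  assumes le: "\<And>u t. f u t \<le> c * g u t + d" and d: "0 \<le> d"
  shows "(\<Sum>u\<in>C. \<Sum>t\<in>UNIV - C. f u t)
    \<le> c * (\<Sum>u\<in>C. \<Sum>t\<in>UNIV - C. g u t) + real CARD('s) ^ 2 * d"
proof -
  have "card C * card (UNIV - C) \<le> CARD('s) * CARD('s)"
    by (intro mult_le_mono card_mono) auto
  then have pairs: "real (card C) * real (card (UNIV - C)) \<le> real CARD('s) ^ 2"
    by (simp add: power2_eq_square flip: of_nat_mult)
  have "(\<Sum>u\<in>C. \<Sum>t\<in>UNIV - C. f u t) \<le> (\<Sum>u\<in>C. \<Sum>t\<in>UNIV - C. c * g u t + d)"
    using le by (intro sum_mono) auto
  also have "\<dots> = c * (\<Sum>u\<in>C. \<Sum>t\<in>UNIV - C. g u t) + real (card C) * real (card (UNIV - C)) * d"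
    by (simp add: sum.distrib sum_distrib_left)
  also have "\<dots> \<le> c * (\<Sum>u\<in>C. \<Sum>t\<in>UNIV - C. g u t) + real CARD('s) ^ 2 * d"
    using pairs d by (simp add: mult_right_mono)
  finally show ?thesis .
qed

lemma close_cut_flow_bounds:
  fixes q qh :: "'s::finite \<Rightarrow> 's \<Rightarrow> real"
  assumes q: "transition_matrix q" and \<mu>: "stationary_dist q \<mu>" and qh: "transition_matrix qh"
    and cl: "close \<epsilon> \<beta> q \<mu> qh" and \<beta>: "0 \<le> \<beta>" and e: "0 \<le> \<epsilon> * zeta q \<mu>"
  shows "(1 - \<beta>) * cut_flow \<mu> q C \<le> cut_flow \<mu> qh C + real CARD('s) ^ 2 * (\<epsilon> * zeta q \<mu>)"
    and "cut_flow \<mu> qh C \<le> (1 + \<beta>) * cut_flow \<mu> q C + real CARD('s) ^ 2 * (\<epsilon> * zeta q \<mu>)"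
proof -
  have nonneg: "0 \<le> \<mu> u" "0 \<le> q u t" "0 \<le> qh u t" for u t
    using q \<mu> qh unfolding transition_matrix_def stationary_dist_def by simp_all
  note edge = close_edge_bounds[OF cl nonneg e \<beta>]
  have "(\<Sum>u\<in>C. \<Sum>t\<in>UNIV - C. (1 - \<beta>) * (\<mu> u * q u t))
      \<le> 1 * cut_flow \<mu> qh C + real CARD('s) ^ 2 * (\<epsilon> * zeta q \<mu>)"
    unfolding cut_flow_def using edge(1) e by (intro cut_sum_le_affine) simp_all
  then show "(1 - \<beta>) * cut_flow \<mu> q C \<le> cut_flow \<mu> qh C + real CARD('s) ^ 2 * (\<epsilon> * zeta q \<mu>)"
    by (simp add: cut_flow_def sum_distrib_left)
  show "cut_flow \<mu> qh C \<le> (1 + \<beta>) * cut_flow \<mu> q C + real CARD('s) ^ 2 * (\<epsilon> * zeta q \<mu>)"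
    unfolding cut_flow_def using edge(2) e by (intro cut_sum_le_affine) simp_all
qed

lemma perturbed_flow_inequality:
  fixes \<beta> \<delta> z F :: real
  assumes "0 \<le> \<beta>" "\<beta> \<le> 1 / 4" "0 \<le> \<delta>" "\<delta> \<le> \<beta>" "0 \<le> z" "z \<le> F"
  shows "(1 + \<beta>) * F + \<delta> * z \<le> (1 + 8 * \<beta>) * ((1 - \<beta>) * F - \<delta> * z)"
proof -
  \<comment> \<open>The difference of the two sides is (6\<beta> - 8\<beta>^2) F - (2 + 8\<beta>) \<delta> z, and
     6\<beta> - 8\<beta>^2 - (2 + 8\<beta>) \<beta> = 4\<beta> (1 - 4\<beta>).\<close>
  have "0 \<le> 2 * \<beta> * (3 - 4 * \<beta>)"
    using assms by simp
  then have c: "0 \<le> 6 * \<beta> - 8 * \<beta>\<^sup>2"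
    by (simp add: algebra_simps power2_eq_square)
  have "(2 + 8 * \<beta>) * (\<delta> * z) \<le> (2 + 8 * \<beta>) * (\<beta> * z)"
    using assms by (intro mult_left_mono mult_right_mono) auto
  moreover have "(6 * \<beta> - 8 * \<beta>\<^sup>2) * z \<le> (6 * \<beta> - 8 * \<beta>\<^sup>2) * F"
    using c assms by (intro mult_left_mono)
  moreover have "0 \<le> 4 * \<beta> * (1 - 4 * \<beta>) * z"
    using assms by simp
  ultimately show ?thesis
    by (simp add: algebra_simps power2_eq_square)
qed

lemma close_cut_flow_ratio:
  fixes q qh :: "'s::finite \<Rightarrow> 's \<Rightarrow> real"
  assumes card: "CARD('s) \<ge> 2" and q: "irreducible q" and \<mu>: "stationary_dist q \<mu>"
    and qh: "transition_matrix qh" and cl: "close \<epsilon> \<beta> q \<mu> qh"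
    and \<beta>: "0 \<le> \<beta>" "\<beta> \<le> 1 / 4" and \<epsilon>: "0 \<le> \<epsilon>" "real CARD('s) ^ 2 * \<epsilon> \<le> \<beta>"
    and C: "C \<noteq> {}" "C \<noteq> UNIV"
  shows "0 < cut_flow \<mu> qh C"
    and "cut_flow \<mu> qh (UNIV - C) \<le> (1 + 8 * \<beta>) * cut_flow \<mu> qh C"
proof -
  let ?z = "zeta q \<mu>" and ?F = "cut_flow \<mu> q C" and ?\<delta> = "real CARD('s) ^ 2 * \<epsilon>"
  have q_tm: "transition_matrix q" using q unfolding irreducible_def by simp
  have z: "0 < ?z" using zeta_pos[OF card q \<mu>] .
  have zF: "?z \<le> ?F" using zeta_le_cut_flow[OF C] .
  have e: "0 \<le> \<epsilon> * ?z" using \<epsilon> z by simp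
  note bounds = close_cut_flow_bounds[OF q_tm \<mu> qh cl \<beta>(1) e]
  have low: "(1 - \<beta>) * ?F - ?\<delta> * ?z \<le> cut_flow \<mu> qh C"
    using bounds(1)[of C] by (simp add: mult.assoc)
  have "?\<delta> * ?z \<le> \<beta> * ?z" using \<epsilon> z by (intro mult_right_mono) auto
  moreover have "(1 - \<beta>) * ?z \<le> (1 - \<beta>) * ?F" using zF \<beta> by (intro mult_left_mono) auto
  moreover have "0 < (1 - 2 * \<beta>) * ?z" using \<beta> z by simp
  ultimately show pos: "0 < cut_flow \<mu> qh C"
    using low by (simp add: algebra_simps)
  have "cut_flow \<mu> qh (UNIV - C) \<le> (1 + \<beta>) * ?F + ?\<delta> * ?z"
    using bounds(2)[of "UNIV - C"] stationary_cut_flow_balance[OF q_tm \<mu>, of C]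
    by (simp add: mult.assoc)
  also have "\<dots> \<le> (1 + 8 * \<beta>) * ((1 - \<beta>) * ?F - ?\<delta> * ?z)"
    by (rule perturbed_flow_inequality) (use \<beta> \<epsilon> z zF in auto)
  also have "\<dots> \<le> (1 + 8 * \<beta>) * cut_flow \<mu> qh C"
    using low \<beta> by (intro mult_left_mono) auto
  finally show "cut_flow \<mu> qh (UNIV - C) \<le> (1 + 8 * \<beta>) * cut_flow \<mu> qh C" .
qed

lemma stationary_ratio_cut_step:
  fixes q :: "'s::finite \<Rightarrow> 's \<Rightarrow> real"
  assumes q: "transition_matrix q" and wh: "stationary_dist q wh" and w: "\<And>u. 0 < w u"
    and pos: "0 < cut_flow w q C" and ratio: "cut_flow w q (UNIV - C) \<le> \<rho> * cut_flow w q C"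
  shows "\<exists>u\<in>C. \<exists>t\<in>UNIV - C. wh u / w u \<le> \<rho> * (wh t / w t)"
proof (rule ccontr)
  define r where "r u = wh u / w u" for u
  have wh_eq: "wh = (\<lambda>u. r u * w u)" using w by (simp add: r_def fun_eq_iff less_imp_neq[symmetric])
  have q_nonneg: "0 \<le> q u t" for u t using q unfolding transition_matrix_def by simp
  assume "\<not> ?thesis"
  then have gap: "\<rho> * r t < r u" if "u \<in> C" "t \<in> UNIV - C" for u t
    using that unfolding r_def by force
  have "C \<noteq> {}" using pos unfolding cut_flow_def by auto
  moreover have "UNIV - C \<noteq> {}"
  proof
    assume "UNIV - C = {}"
    then have "cut_flow w q C = 0" unfolding cut_flow_def by (simp only: sum.empty sum.neutral_const)
    then show False using pos by simp
  qed
  ultimately obtain a b where a: "a \<in> C" "Min (r ` C) = r a"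
    and b: "b \<in> UNIV - C" "Max (r ` (UNIV - C)) = r b"
    using obtains_MIN[of C r] obtains_MAX[of "UNIV - C" r] by (metis finite)
  have a_min: "r a \<le> r u" if "u \<in> C" for u
    using that Min_le[of "r ` C" "r u"] a(2) by simp
  have b_max: "r t \<le> r b" if "t \<in> UNIV - C" for t
    using that Max_ge[of "r ` (UNIV - C)" "r t"] b(2) by simp
  have rb: "0 \<le> r b" using wh w[of b] unfolding r_def stationary_dist_def by simp
  have "r a * cut_flow w q C \<le> cut_flow wh q C"
    unfolding wh_eq cut_flow_scale[symmetric] using a_min w q_nonneg
    by (intro cut_flow_mono_weight) (simp_all add: mult_right_mono less_imp_le)
  also have "\<dots> = cut_flow wh q (UNIV - C)"
    by (rule stationary_cut_flow_balance[OF q wh])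
  also have "\<dots> \<le> r b * cut_flow w q (UNIV - C)"
    unfolding wh_eq cut_flow_scale[symmetric] using b_max w q_nonneg
    by (intro cut_flow_mono_weight) (simp_all add: mult_right_mono less_imp_le)
  also have "\<dots> \<le> r b * (\<rho> * cut_flow w q C)"
    using ratio rb by (rule mult_left_mono)
  also have "\<dots> < r a * cut_flow w q C"
    using gap[OF a(1) b(1)] pos by (simp add: mult.assoc[symmetric] mult.commute[of "r b"])
  finally show False by simp
qed

lemma cut_chain_bound:
  fixes r :: "'s::finite \<Rightarrow> real"
  assumes \<rho>: "1 \<le> \<rho>" and r: "\<And>u. 0 \<le> r u"
    and cut: "\<And>C. C \<noteq> {} \<Longrightarrow> C \<noteq> UNIV \<Longrightarrow> \<exists>u\<in>C. \<exists>t\<in>UNIV - C. r u \<le> \<rho> * r t"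
  shows "r s \<le> \<rho> ^ (CARD('s) - 1) * r t"
proof -
  \<comment> \<open>Applied to the cut D k, the hypothesis adds a state to D (Suc k), so D (CARD('s) - 1) = UNIV.\<close>
  define D where "D k = {u. r s \<le> \<rho> ^ k * r u}" for k
  have D_mono: "D k \<subseteq> D (Suc k)" for k
  proof
    fix u assume "u \<in> D k"
    moreover have "\<rho> ^ k * r u \<le> \<rho> ^ Suc k * r u"
      using \<rho> r[of u] by (intro mult_right_mono) (auto simp: power_increasing)
    ultimately show "u \<in> D (Suc k)" unfolding D_def by simp
  qed
  have grow: "Suc k \<le> card (D k)" if "k < CARD('s)" for k
    using that
  proof (induction k)
    case 0
    have "s \<in> D 0" by (simp add: D_def)
    then show ?case by (simp add: Suc_le_eq card_gt_0_iff) blast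
  next
    case (Suc k)
    show ?case
    proof (cases "D k = UNIV")
      case True
      then have "D (Suc k) = UNIV" using D_mono[of k] by auto
      then show ?thesis using Suc.prems by simp
    next
      case False
      have "D k \<noteq> {}" using Suc.IH Suc.prems by auto
      then obtain u t' where u: "u \<in> D k" "t' \<notin> D k" "r u \<le> \<rho> * r t'"
        using cut[OF _ False] by blast
      have "r s \<le> \<rho> ^ k * r u" using u(1) by (simp add: D_def)
      also have "\<dots> \<le> \<rho> ^ k * (\<rho> * r t')" using u(3) \<rho> by (intro mult_left_mono) auto
      finally have "t' \<in> D (Suc k)" by (simp add: D_def algebra_simps)
      then have "insert t' (D k) \<subseteq> D (Suc k)" using D_mono[of k] by auto
      then have "card (insert t' (D k)) \<le> card (D (Suc k))" by (intro card_mono) auto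
      then show ?thesis using u(2) Suc.IH Suc.prems by simp
    qed
  qed
  have "CARD('s) \<le> card (D (CARD('s) - 1))" using grow[of "CARD('s) - 1"] by simp
  then have "D (CARD('s) - 1) = UNIV"
    using card_seteq[of UNIV "D (CARD('s) - 1)"] by simp
  then show ?thesis by (auto simp: D_def)
qed

lemma ex_le_if_sum_le:
  fixes f g :: "'a::finite \<Rightarrow> 'b::{strict_ordered_comm_monoid_add, linorder}"
  assumes "sum f UNIV \<le> sum g UNIV"
  shows "\<exists>t. f t \<le> g t"
proof (rule ccontr)
  assume "\<not> ?thesis"
  then have "sum g UNIV < sum f UNIV" by (intro sum_strict_mono) (auto simp: not_le)
  then show False using assms by simp
qed

lemma ratio_deviation_bound:
  fixes w wh :: "'s::finite \<Rightarrow> real"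
  assumes w: "\<And>u. 0 < w u" and sums: "sum wh UNIV = sum w UNIV" and P: "1 \<le> P"
    and ratio: "\<And>x y. wh x / w x \<le> P * (wh y / w y)"
  shows "\<bar>1 - wh s / w s\<bar> \<le> P - 1"
proof -
  obtain t1 t2 where "wh t1 \<le> w t1" "w t2 \<le> wh t2"
    using ex_le_if_sum_le[of wh w] ex_le_if_sum_le[of w wh] sums by auto
  then have t1: "wh t1 / w t1 \<le> 1" and t2: "1 \<le> wh t2 / w t2"
    using w[of t1] w[of t2] by simp_all
  have "wh s / w s \<le> P * (wh t1 / w t1)" by (rule ratio)
  also have "\<dots> \<le> P" using mult_left_mono[OF t1, of P] P by simp
  finally have upper: "wh s / w s \<le> P" .
  have lower: "1 \<le> P * (wh s / w s)" using t2 ratio[of t2 s] by simp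
  show ?thesis
  proof (cases "1 \<le> wh s / w s")
    case False
    then have "1 - wh s / w s \<le> P * (1 - wh s / w s)" using P by (simp add: mult_le_cancel_right1)
    then show ?thesis using False lower by (simp add: right_diff_distrib)
  qed (use upper in simp)
qed

lemma stationary_dist_ratio_bound:
  fixes q :: "'s::finite \<Rightarrow> 's \<Rightarrow> real"
  assumes q: "transition_matrix q" and wh: "stationary_dist q wh"
    and w: "\<And>u. 0 < w u" "sum w UNIV = 1" and \<rho>: "1 \<le> \<rho>"
    and cut: "\<And>C. C \<noteq> {} \<Longrightarrow> C \<noteq> UNIV \<Longrightarrow>
      0 < cut_flow w q C \<and> cut_flow w q (UNIV - C) \<le> \<rho> * cut_flow w q C"
  shows "\<bar>1 - wh s / w s\<bar> \<le> \<rho> ^ (CARD('s) - 1) - 1"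
proof (rule ratio_deviation_bound[OF w(1)])
  show "wh x / w x \<le> \<rho> ^ (CARD('s) - 1) * (wh y / w y)" for x y
  proof (rule cut_chain_bound[OF \<rho>])
    show "0 \<le> wh u / w u" for u
      using wh w(1)[of u] unfolding stationary_dist_def by simp
    show "\<exists>u\<in>C. \<exists>t\<in>UNIV - C. wh u / w u \<le> \<rho> * (wh t / w t)"
      if "C \<noteq> {}" "C \<noteq> UNIV" for C
      using stationary_ratio_cut_step[of q wh w, OF q wh w(1)] cut[OF that] by simp
  qed
  show "sum wh UNIV = sum w UNIV" using wh w(2) unfolding stationary_dist_def by simp
  show "1 \<le> \<rho> ^ (CARD('s) - 1)" using \<rho> by (rule one_le_power)
qed

lemma one_plus_power_le:
  fixes x :: real
  assumes "0 \<le> x" "x \<le> 1"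
  shows "(1 + x) ^ n \<le> 1 + x * (2 ^ n - 1)"
proof (induction n)
  case (Suc n)
  have "(1 + x) ^ Suc n \<le> (1 + x) * (1 + x * (2 ^ n - 1))"
    using Suc.IH assms by (simp add: mult_left_mono)
  also have "\<dots> = 1 + x * 2 ^ n + x * x * (2 ^ n - 1)"
    by (simp add: algebra_simps)
  also have "\<dots> \<le> 1 + x * 2 ^ n + x * (2 ^ n - 1)"
    using assms by (simp add: mult_right_mono mult_left_le)
  finally show ?case by (simp add: algebra_simps)
qed simp

(* Only the term n = N - 1 of L_const is needed: for this argument the bound 18 \<beta> L of the
   theorem is far from tight. *)
lemma L_const_ge:
  assumes "2 \<le> N"
  shows "real N * real (N - 1) ^ N \<le> L_const N"
proof -
  have "real (N choose (N - 1)) * real (N - 1) ^ N \<le> L_const N"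
    unfolding L_const_def using assms by (intro member_le_sum) auto
  moreover have "N choose (N - 1) = N"
    using assms binomial_symmetric[of 1 N] by simp
  ultimately show ?thesis by simp
qed

lemma L_const_ge_one:
  assumes "2 \<le> N"
  shows "1 \<le> L_const N"
proof -
  have "1 \<le> real (N - 1) ^ N" using assms by (intro one_le_power) auto
  then have "1 \<le> real N * real (N - 1) ^ N"
    using assms mult_mono[of 1 "real N" 1 "real (N - 1) ^ N"] by simp
  then show ?thesis using L_const_ge[OF assms] by linarith
qed

lemma two_power_le_L_const:
  assumes "2 \<le> N"
  shows "2 ^ N \<le> 2 * L_const N"
proof (cases "N = 2")
  case True
  then show ?thesis using L_const_ge[OF assms] by simp
next
  case False
  then have "(2::real) ^ N \<le> real (N - 1) ^ N"
    using assms by (intro power_mono) auto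
  also have "\<dots> \<le> real N * real (N - 1) ^ N"
    using assms by (simp add: mult_le_cancel_right1)
  also have "\<dots> \<le> L_const N" by (rule L_const_ge[OF assms])
  finally have "(2::real) ^ N \<le> L_const N" .
  moreover have "(0::real) \<le> 2 ^ N" by simp
  ultimately show ?thesis by linarith
qed

lemma perturbation_power_bound:
  assumes N: "2 \<le> N" and \<beta>: "0 < \<beta>" "\<beta> < 1 / 2 ^ N"
  shows "(1 + 8 * \<beta>) ^ (N - 1) - 1 \<le> 18 * \<beta> * L_const N"
proof (cases "N = 2")
  case True
  then show ?thesis using L_const_ge_one[OF N] \<beta> by simp
next
  case False
  then have "(8::real) \<le> 2 ^ N"
    using N power_increasing[of 3 N "2::real"] by simp
  then have "8 * \<beta> \<le> 2 ^ N * \<beta>"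
    using \<beta> by (simp add: mult_right_mono)
  also have "\<dots> < 1"
    using \<beta> by (simp add: field_simps)
  finally have "8 * \<beta> \<le> 1" by simp
  then have "(1 + 8 * \<beta>) ^ (N - 1) - 1 \<le> 8 * \<beta> * (2 ^ (N - 1) - 1)"
    using one_plus_power_le[of "8 * \<beta>" "N - 1"] \<beta> by simp
  also have "\<dots> \<le> 4 * \<beta> * 2 ^ N"
    using N \<beta> by (simp add: power_diff)
  also have "\<dots> \<le> 4 * \<beta> * (2 * L_const N)"
    using two_power_le_L_const[OF N] \<beta> by simp
  also have "\<dots> \<le> 18 * \<beta> * L_const N"
    using L_const_ge_one[OF N] \<beta> by simp
  finally show ?thesis .
qed

lemma closeness_threshold_le:
  assumes N: "2 \<le> N" and \<beta>: "0 < \<beta>" "\<beta> < 1"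
    and \<epsilon>: "0 < \<epsilon>" "\<epsilon> < \<beta> * (1 - \<beta>) / (L_const N * real N ^ 4)"
  shows "real N ^ 2 * \<epsilon> \<le> \<beta>"
proof -
  have L: "1 \<le> L_const N" by (rule L_const_ge_one[OF N])
  have "real N ^ 2 \<le> real N ^ 4" using N by (intro power_increasing) auto
  also have "\<dots> \<le> L_const N * real N ^ 4" using L by (simp add: mult_le_cancel_right1)
  finally have "real N ^ 2 * \<epsilon> \<le> L_const N * real N ^ 4 * \<epsilon>"
    using \<epsilon> by (intro mult_right_mono) auto
  also have "\<dots> \<le> \<beta> * (1 - \<beta>)"
    using \<epsilon> L N by (simp add: pos_less_divide_eq mult.commute)
  also have "\<dots> \<le> \<beta>" using \<beta> by (simp add: algebra_simps)
  finally show ?thesis .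
qed

theorem theorem1:
  fixes \<beta> \<epsilon> :: real
    and q qh :: "'s::finite \<Rightarrow> 's \<Rightarrow> real"
    and \<mu> :: "'s \<Rightarrow> real"
  assumes card: "CARD('s) \<ge> 2"
    and beta: "0 < \<beta>" "\<beta> < 1 / 2 ^ CARD('s)"
    and eps: "0 < \<epsilon>" "\<epsilon> < \<beta> * (1 - \<beta>) / (L_const CARD('s) * real CARD('s) ^ 4)"
    and irr: "irreducible q"
    and mu: "stationary_dist q \<mu>"
    and tm: "transition_matrix qh"
    and cl: "close \<epsilon> \<beta> q \<mu> qh"
  shows "irreducible qh \<and>
    (\<forall>\<mu>h. stationary_dist qh \<mu>h \<longrightarrow>
       (\<forall>s. \<bar>1 - \<mu>h s / \<mu> s\<bar> \<le> 18 * \<beta> * L_const CARD('s)))"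
proof -
  have "(4::real) \<le> 2 ^ CARD('s)"
    using card power_increasing[of 2 "CARD('s)" "2::real"] by simp
  then have beta_small: "\<beta> \<le> 1 / 4"
    using beta by (smt (verit) frac_le)
  have eps_small: "real CARD('s) ^ 2 * \<epsilon> \<le> \<beta>"
    using closeness_threshold_le[OF card beta(1) _ eps] beta_small by simp
  note cut = close_cut_flow_ratio[OF card irr mu tm cl less_imp_le[OF beta(1)] beta_small
      less_imp_le[OF eps(1)] eps_small]
  have \<mu>_pos: "\<And>u. 0 < \<mu> u" by (rule irreducible_stationary_dist_pos[OF irr mu])
  have "irreducible qh"
    using irreducible_iff_cut_flow_pos[of qh \<mu>, OF tm \<mu>_pos] cut(1) by simp
  moreover have "\<bar>1 - \<mu>h s / \<mu> s\<bar> \<le> 18 * \<beta> * L_const CARD('s)"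
    if "stationary_dist qh \<mu>h" for \<mu>h s
  proof -
    have "\<bar>1 - \<mu>h s / \<mu> s\<bar> \<le> (1 + 8 * \<beta>) ^ (CARD('s) - 1) - 1"
      using mu beta cut unfolding stationary_dist_def
      by (intro stationary_dist_ratio_bound[OF tm that \<mu>_pos]) simp_all
    also have "\<dots> \<le> 18 * \<beta> * L_const CARD('s)"
      by (rule perturbation_power_bound[OF card beta])
    finally show ?thesis .
  qed
  ultimately show ?thesis by blast
qed

end
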